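(* Let $A$ and $B$ be finite commutative groups. Fix any isomorphism $\psi:\mathbb{Z}_{q_1}\times\cdots\times\mathbb{Z}_{q_n}\to A$ with positive integers $q_1,\dots,q_n$, and call a map $f:A\to B$ polyfractal if there is a $B$-polyfract $P$ in $X_1,\dots,X_n$ with $P(x)=f(\psi(x_1+q_1\mathbb{Z},\dots,x_n+q_n\mathbb{Z}))$ for all $x\in\mathbb{Z}^n$. Then $$\{f\in B^A : f\text{ is polyfractal}\}=\prod_{p\ \text{prime}}B_p^{A_p},$$ where $A_p$ and $B_p$ are the $p$-primary components of $A$ and $B$, and $\prod_p B_p^{A_p}$ denotes the set of maps $A=\prod_p A_p\to B=\prod_p B_p$ of the form $(a_p)_p\mapsto (f_p(a_p))_p$ with arbitrary $f_p:A_p\to B_p$. In particular this set does not depend on the chosen cyclic decomposition $\psi$.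
   Context: Notation: $\mathbb{Z}_r=\mathbb{Z}/r\mathbb{Z}$. For $\delta\in\mathbb{N}$, $\binom{X}{\delta}=X(X-1)\cdots(X-\delta+1)/\delta!$, $\binom{X}{0}=1$. For a finitely generated commutative group $B$, a $B$-polyfract in $X_1,\dots,X_n$ is a formal finite sum $P=\sum_{\delta\in\mathbb{N}^n}P_\delta\prod_{j=1}^n\binom{X_j}{\delta_j}$ with $P_\delta\in B$, evaluated at $x\in\mathbb{Z}^n$ by $P(x)=\sum_\delta\big(\prod_j\binom{x_j}{\delta_j}\big)P_\delta\in B$. *)

theory Defs
  imports "HOL-Computational_Algebra.Primes"
begin

definition zsmul :: "int \<Rightarrow> 'b::ab_group_add \<Rightarrow> 'b" where
  "zsmul k b = (if 0 \<le> k then (\<Sum>_\<in>{..<nat k}. b) else - (\<Sum>_\<in>{..<nat (-k)}. b))"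

definition ibinom :: "int \<Rightarrow> nat \<Rightarrow> int" where
  "ibinom x d = (\<Prod>i<d. x - int i) div fact d"

text \<open>Evaluation of the B-polyfract with finite support D and coefficients c
  in the variables X_0,...,X_(n-1) at the point x in Z^n.\<close>
definition polyfract_eval ::
  "nat \<Rightarrow> (nat \<Rightarrow> nat) set \<Rightarrow> ((nat \<Rightarrow> nat) \<Rightarrow> 'b::ab_group_add) \<Rightarrow> (nat \<Rightarrow> int) \<Rightarrow> 'b" where
  "polyfract_eval n D c x = (\<Sum>\<delta>\<in>D. zsmul (\<Prod>j<n. ibinom (x j) (\<delta> j)) (c \<delta>))"

text \<open>Z_{q_0} x ... x Z_{q_(n-1)} represented by standard representatives.\<close>
definition Zq :: "(nat \<Rightarrow> int) \<Rightarrow> nat \<Rightarrow> (nat \<Rightarrow> int) set" where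
  "Zq q n = {u. (\<forall>j<n. 0 \<le> u j \<and> u j < q j) \<and> (\<forall>j\<ge>n. u j = 0)}"

definition redq :: "(nat \<Rightarrow> int) \<Rightarrow> nat \<Rightarrow> (nat \<Rightarrow> int) \<Rightarrow> (nat \<Rightarrow> int)" where
  "redq q n x = (\<lambda>j. if j < n then x j mod q j else 0)"

definition cyc_iso :: "(nat \<Rightarrow> int) \<Rightarrow> nat \<Rightarrow> ((nat \<Rightarrow> int) \<Rightarrow> 'a::ab_group_add) \<Rightarrow> bool" where
  "cyc_iso q n \<psi> \<longleftrightarrow> (\<forall>j<n. 0 < q j) \<and> bij_betw \<psi> (Zq q n) UNIV \<and>
     (\<forall>u\<in>Zq q n. \<forall>v\<in>Zq q n. \<psi> (redq q n (\<lambda>j. u j + v j)) = \<psi> u + \<psi> v)"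

definition polyfractal ::
  "(nat \<Rightarrow> int) \<Rightarrow> nat \<Rightarrow> ((nat \<Rightarrow> int) \<Rightarrow> 'a::ab_group_add) \<Rightarrow> ('a \<Rightarrow> 'b::ab_group_add) \<Rightarrow> bool" where
  "polyfractal q n \<psi> f \<longleftrightarrow> (\<exists>D c. finite D \<and>
     (\<forall>x. polyfract_eval n D c x = f (\<psi> (redq q n x))))"

definition primary :: "nat \<Rightarrow> 'a::ab_group_add set" where
  "primary p = {a. \<exists>k. zsmul (int (p ^ k)) a = 0}"

text \<open>prod_p B_p^{A_p}: maps acting componentwise on the primary decomposition.
  Only primes dividing |A|*|B| matter: for all other primes A_p = B_p = 0.\<close>
definition primary_prod_maps :: "('a::{ab_group_add,finite} \<Rightarrow> 'b::{ab_group_add,finite}) set" where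
  "primary_prod_maps = {f. \<exists>F :: nat \<Rightarrow> 'a \<Rightarrow> 'b.
     let S = {p. prime p \<and> p dvd card (UNIV :: 'a set) * card (UNIV :: 'b set)} in
     (\<forall>p\<in>S. \<forall>a\<in>primary p. F p a \<in> primary p) \<and>
     (\<forall>a :: nat \<Rightarrow> 'a. (\<forall>p\<in>S. a p \<in> primary p) \<longrightarrow>
        f (\<Sum>p\<in>S. a p) = (\<Sum>p\<in>S. F p (a p)))}"

end

theory Submission
  imports Defs "HOL-Computational_Algebra.Polynomial" "HOL-Number_Theory.Cong" "HOL-Library.FuncSet"
begin

text \<open>Write \<open>E = |A| |B|\<close> and let \<open>e\<^sub>p\<close> be the idempotents of \<open>\<int>/E\<close>, so that multiplication by
  \<open>e\<^sub>p\<close> projects \<open>A\<close> and \<open>B\<close> onto their \<open>p\<close>-primary components and \<open>\<Sum>\<^sub>p e\<^sub>p = 1\<close>.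

  If \<open>f\<close> is polyfractal, then along each coordinate line the function \<open>e\<^sub>p f\<close> is periodic,
  annihilated by a power of the difference operator \<open>\<Delta>\<close> and by a power of \<open>p\<close>. An identity in
  \<open>\<int>[X]\<close> then shows that it is already periodic modulo the \<open>p\<close>-part of the period, so
  \<open>e\<^sub>p f (y + z) = e\<^sub>p f y\<close> whenever \<open>z\<close> is killed by the prime-to-\<open>p\<close> part of \<open>E\<close>: \<open>f\<close> acts
  componentwise.

  Conversely, a componentwise map is a sum of \<open>p\<close>-power torsion valued functions of the
  coordinates modulo powers of \<open>p\<close>. Such functions are polyfractal, because on
  \<open>p\<^sup>a\<close>-periodic integer functions \<open>\<Delta>\<^sup>p\<^sup>\<^sup>a\<^sup>k\<close> vanishes modulo \<open>p\<^sup>k\<close>, so the Newton series of a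
  residue class indicator terminates modulo \<open>p\<^sup>k\<close>.\<close>

section \<open>Integer multiples\<close>

lemma zsmul_zero_left [simp]: "zsmul 0 b = 0"
  by (simp add: zsmul_def)

lemma zsmul_add_one_left: "zsmul (k + 1) b = zsmul k b + b"
proof (cases "k \<ge> 0")
  case True
  then have "nat (k + 1) = Suc (nat k)" by simp
  with True show ?thesis by (simp add: zsmul_def)
next
  case False
  show ?thesis
  proof (cases "k = -1")
    case True
    then show ?thesis by (simp add: zsmul_def)
  next
    case False
    with \<open>\<not> k \<ge> 0\<close> have "nat (- k) = Suc (nat (- (k + 1)))" "\<not> 0 \<le> k + 1" by simp_all
    with \<open>\<not> k \<ge> 0\<close> show ?thesis by (simp add: zsmul_def)
  qed
qed

lemma zsmul_add_left: "zsmul (a + c) b = zsmul a b + zsmul c b"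
proof (induction c rule: int_induct[where k = 0])
  case (step1 i)
  then show ?case
    using zsmul_add_one_left[of "a + i" b] zsmul_add_one_left[of i b] by (simp add: add.assoc[symmetric])
next
  case (step2 i)
  then show ?case
    using zsmul_add_one_left[of "a + (i - 1)" b] zsmul_add_one_left[of "i - 1" b] by (simp add: algebra_simps)
qed simp

lemma zsmul_one_left [simp]: "zsmul 1 b = b"
  using zsmul_add_one_left[of 0 b] by simp

lemma zsmul_minus_left: "zsmul (- a) b = - zsmul a b"
  using zsmul_add_left[of a "- a" b] by (simp add: eq_neg_iff_add_eq_0 add.commute)

lemma zsmul_diff_left: "zsmul (a - c) b = zsmul a b - zsmul c b"
  using zsmul_add_left[of a "- c" b] by (simp add: zsmul_minus_left)

lemma zsmul_zero_right [simp]: "zsmul a (0 :: 'b :: ab_group_add) = 0"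
  by (induction a rule: int_induct[where k = 0]) (auto simp: zsmul_add_left zsmul_diff_left)

lemma zsmul_add_right: "zsmul a (b + c) = zsmul a b + zsmul a (c :: 'b :: ab_group_add)"
  by (induction a rule: int_induct[where k = 0]) (auto simp: zsmul_add_left zsmul_diff_left algebra_simps)

lemma zsmul_minus_right: "zsmul a (- b) = - zsmul a (b :: 'b :: ab_group_add)"
  using zsmul_add_right[of a b "- b"] by (simp add: eq_neg_iff_add_eq_0 add.commute)

lemma zsmul_diff_right: "zsmul a (b - c) = zsmul a b - zsmul a (c :: 'b :: ab_group_add)"
  using zsmul_add_right[of a b "- c"] by (simp add: zsmul_minus_right)

lemma zsmul_mult: "zsmul (a * c) b = zsmul a (zsmul c (b :: 'b :: ab_group_add))"
  by (induction a rule: int_induct[where k = 0]) (auto simp: zsmul_add_left zsmul_diff_left algebra_simps)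

lemma zsmul_commute: "zsmul a (zsmul c b) = zsmul c (zsmul a (b :: 'b :: ab_group_add))"
  by (metis zsmul_mult mult.commute)

lemma zsmul_sum_right: "zsmul a (\<Sum>i\<in>I. f i) = (\<Sum>i\<in>I. zsmul a (f i :: 'b :: ab_group_add))"
  by (induction I rule: infinite_finite_induct) (auto simp: zsmul_add_right)

lemma zsmul_sum_left: "zsmul (\<Sum>i\<in>I. f i) b = (\<Sum>i\<in>I. zsmul (f i) (b :: 'b :: ab_group_add))"
  by (induction I rule: infinite_finite_induct) (auto simp: zsmul_add_left)

lemma zsmul_int_eq_mult [simp]: "zsmul a (x :: int) = a * x"
  by (induction a rule: int_induct[where k = 0]) (auto simp: zsmul_add_left zsmul_diff_left algebra_simps)

lemma sum_const_eq_zsmul_card: "finite A \<Longrightarrow> (\<Sum>_\<in>A. b) = zsmul (int (card A)) b"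
  by (induction A rule: finite_induct) (auto simp: zsmul_add_left)

text \<open>Translating by \<open>a\<close> permutes the group, so \<open>\<Sum>x. a + x = \<Sum>x. x\<close>.\<close>
lemma zsmul_card_UNIV: "zsmul (int (card (UNIV :: 'a set))) (a :: 'a :: {ab_group_add, finite}) = 0"
proof -
  have "(\<Sum>x\<in>UNIV. a + x) = (\<Sum>x\<in>(UNIV :: 'a set). x)"
    by (rule sum.reindex_bij_betw)
      (auto simp: bij_betw_def inj_on_def intro!: image_eqI[of _ _ "x - a" for x])
  then show ?thesis
    by (simp add: sum.distrib sum_const_eq_zsmul_card)
qed

lemma zsmul_eq_0_gcd:
  "zsmul x b = 0 \<Longrightarrow> zsmul y b = 0 \<Longrightarrow> zsmul (gcd x y) (b :: 'b :: ab_group_add) = 0"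
  using bezout_int[of x y]
  by (metis (no_types) add.right_neutral mult.commute zsmul_add_left zsmul_mult zsmul_zero_right)

lemma zsmul_eq_0_dvd: "zsmul x b = 0 \<Longrightarrow> x dvd y \<Longrightarrow> zsmul y (b :: 'b :: ab_group_add) = 0"
  by (auto simp: mult.commute zsmul_mult elim!: dvdE)

lemma zsmul_cong:
  "zsmul m b = 0 \<Longrightarrow> [x = y] (mod m) \<Longrightarrow> zsmul x b = zsmul y (b :: 'b :: ab_group_add)"
  using zsmul_eq_0_dvd[of m b "x - y"] by (simp add: cong_iff_dvd_diff zsmul_diff_left)

section \<open>Polynomials acting by shifts\<close>

definition fdiff :: "(int \<Rightarrow> 'b :: ab_group_add) \<Rightarrow> int \<Rightarrow> 'b" where
  "fdiff h t = h (t + 1) - h t"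

text \<open>\<open>X\<close> acts as the shift \<open>t \<mapsto> t + 1\<close>, hence \<open>X - 1\<close> as \<^const>\<open>fdiff\<close>; this turns identities
  in \<open>\<int>[X]\<close> into identities of difference operators.\<close>
definition shift_act :: "int poly \<Rightarrow> (int \<Rightarrow> 'b :: ab_group_add) \<Rightarrow> int \<Rightarrow> 'b" where
  "shift_act P h t = (\<Sum>i\<le>degree P. zsmul (coeff P i) (h (t + int i)))"

lemma shift_act_eq_sum_lessThan:
  "degree P < K \<Longrightarrow> shift_act P h t = (\<Sum>i<K. zsmul (coeff P i) (h (t + int i)))"
  unfolding shift_act_def by (rule sum.mono_neutral_left) (auto simp: coeff_eq_0)

lemma shift_act_add: "shift_act (P + Q) h t = shift_act P h t + shift_act Q h t"
proof -
  define K where "K = Suc (max (degree P) (degree Q))"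
  have "degree (P + Q) < K" "degree P < K" "degree Q < K"
    using degree_add_le[of P "max (degree P) (degree Q)" Q] by (auto simp: K_def)
  then show ?thesis by (simp add: shift_act_eq_sum_lessThan zsmul_add_left sum.distrib)
qed

lemma shift_act_diff: "shift_act (P - Q) h t = shift_act P h t - shift_act Q h t"
  using shift_act_add[of "P - Q" Q h t] by simp

lemma shift_act_smult: "shift_act (smult c P) h t = zsmul c (shift_act P h t)"
proof -
  have "degree (smult c P) < Suc (degree P)" "degree P < Suc (degree P)"
    using degree_smult_le[of c P] by auto
  then show ?thesis
    by (simp only: shift_act_eq_sum_lessThan[where K = "Suc (degree P)"] zsmul_mult zsmul_sum_right coeff_smult)
qed

lemma shift_act_0 [simp]: "shift_act 0 h t = 0"
  by (simp add: shift_act_def)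

lemma shift_act_pCons: "shift_act (pCons a P) h t = zsmul a (h t) + shift_act P h (t + 1)"
proof -
  have "degree (pCons a P) < Suc (Suc (degree P))" "degree P < Suc (degree P)"
    using degree_pCons_le[of a P] by auto
  then have "shift_act (pCons a P) h t
      = zsmul a (h t) + (\<Sum>i<Suc (degree P). zsmul (coeff P i) (h (t + int (Suc i))))"
    by (simp only: shift_act_eq_sum_lessThan[where K = "Suc (Suc (degree P))"] sum.lessThan_Suc_shift
        coeff_pCons_0 coeff_pCons_Suc) simp
  also have "\<dots> = zsmul a (h t) + shift_act P h (t + 1)"
    by (simp add: shift_act_eq_sum_lessThan[where K = "Suc (degree P)" and P = P] algebra_simps
        del: sum.lessThan_Suc)
  finally show ?thesis .
qed

lemma shift_act_mult: "shift_act (P * Q) h t = shift_act P (shift_act Q h) t"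
  by (induction P arbitrary: t) (simp_all add: shift_act_add shift_act_smult shift_act_pCons)

lemma shift_act_1: "shift_act 1 h t = h t"
  using shift_act_pCons[of 1 0 h t] by (simp add: one_pCons)

lemma shift_act_monom_minus_1: "shift_act ([:0, 1:] ^ N - 1) h t = h (t + int N) - h t"
proof -
  have "degree (monom (1 :: int) N) < Suc N"
    using degree_monom_le[of "1 :: int" N] by simp
  then have "shift_act (monom 1 N) h t = h (t + int N)"
    by (simp add: shift_act_eq_sum_lessThan[where K = "Suc N"] if_distrib cong: if_cong)
  then show ?thesis
    by (simp add: shift_act_diff shift_act_1 monom_altdef[of 1 N, simplified, symmetric])
qed

lemma shift_act_power: "shift_act (P ^ k) h = (shift_act P ^^ k) h"
proof (induction k)
  case 0
  then show ?case by (simp add: shift_act_1[abs_def])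
next
  case (Suc k)
  then show ?case by (intro ext) (simp add: shift_act_mult)
qed

lemma shift_act_fdiff_power:
  fixes h :: "int \<Rightarrow> 'b :: ab_group_add"
  shows "shift_act ([:-1, 1:] ^ k) h = (fdiff ^^ k) h"
proof -
  have "shift_act [:-1, 1:] = (fdiff :: (int \<Rightarrow> 'b) \<Rightarrow> _)"
    by (intro ext) (simp add: shift_act_pCons fdiff_def zsmul_minus_left)
  then show ?thesis unfolding shift_act_power by simp
qed

lemma shift_act_eq_0: "(\<And>t. h t = 0) \<Longrightarrow> shift_act P h t = 0"
  by (simp add: shift_act_def)

lemma shift_act_sum: "shift_act P (\<lambda>t. \<Sum>i\<in>I. f i t) t = (\<Sum>i\<in>I. shift_act P (f i) t)"
  unfolding shift_act_def zsmul_sum_right by (rule sum.swap)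

lemma const_poly_power: "[:c:] ^ k = [:c ^ k:]"
  by (induction k) (simp_all add: one_pCons mult.commute)

lemma monom_1_minus_1: "[:0, 1:] - 1 = ([:-1, 1:] :: int poly)"
  by (simp add: one_pCons)

lemma power_add_eq_mult_plus_power:
  fixes e c :: "'a :: comm_ring_1"
  shows "\<exists>A. (e + c) ^ k = e * A + c ^ k"
proof (induction k)
  case 0
  show ?case by (rule exI[of _ 0]) simp
next
  case (Suc k)
  then obtain A where "(e + c) ^ k = e * A + c ^ k" by blast
  then have "(e + c) ^ Suc k = e * ((e + c) * A + c ^ k) + c ^ Suc k"
    by (simp add: algebra_simps)
  then show ?case by blast
qed

lemma sub_one_power_prime:
  fixes y :: "'a :: comm_ring_1"
  assumes p: "prime p"
  shows "\<exists>D. (y - 1) ^ p = y ^ p - 1 + of_nat p * D"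
proof -
  have p1: "p > 1" using p prime_gt_1_nat by blast
  have divp: "(of_nat (p choose k) :: 'a) = of_nat p * of_nat ((p choose k) div p)" if "k \<in> {1..p-1}" for k
  proof -
    from that p1 have "p dvd (p choose k)" using dvd_choose_prime p by auto
    then show ?thesis by (metis dvd_mult_div_cancel of_nat_mult)
  qed
  have odd_case: "(-1 :: 'a) ^ p = -1 + of_nat p * (if p = 2 then 1 else 0)"
  proof (cases "p = 2")
    case False
    then have "odd p" using p prime_odd_nat p1 by fastforce
    then show ?thesis using False by simp
  qed simp
  have "(y - 1) ^ p = (\<Sum>k\<le>p. of_nat (p choose k) * y ^ k * (-1) ^ (p - k))"
    using binomial_ring[of y "-1" p] by simp
  also have "{..p} = insert p (insert 0 {1..p-1})" using p1 by auto
  also have "(\<Sum>k\<in>insert p (insert 0 {1..p-1}). of_nat (p choose k) * y ^ k * (-1 :: 'a) ^ (p - k))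
      = y ^ p + (-1) ^ p + (\<Sum>k\<in>{1..p-1}. of_nat (p choose k) * y ^ k * (-1) ^ (p - k))"
    using p1 by (subst sum.insert; simp)+
  also have "(\<Sum>k\<in>{1..p-1}. of_nat (p choose k) * y ^ k * (-1 :: 'a) ^ (p - k))
      = of_nat p * (\<Sum>k\<in>{1..p-1}. of_nat ((p choose k) div p) * y ^ k * (-1) ^ (p - k))"
    by (simp add: divp sum_distrib_left mult.assoc)
  finally show ?thesis
    unfolding odd_case by (intro exI[of _ "(if p = 2 then 1 else 0)
      + (\<Sum>k\<in>{1..p-1}. of_nat ((p choose k) div p) * y ^ k * (-1) ^ (p - k))"]) (simp add: algebra_simps)
qed

lemma sub_one_power_prime_power:
  fixes x :: "'a :: comm_ring_1"
  assumes p: "prime p"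
  shows "\<exists>C. (x - 1) ^ (p ^ a) = x ^ (p ^ a) - 1 + of_nat p * C"
proof (induction a)
  case 0
  show ?case by (rule exI[of _ 0]) simp
next
  case (Suc a)
  then obtain C where C: "(x - 1) ^ (p ^ a) = x ^ (p ^ a) - 1 + of_nat p * C" by blast
  obtain D where D: "(of_nat p * C + (x ^ (p ^ a) - 1)) ^ p = of_nat p * C * D + (x ^ (p ^ a) - 1) ^ p"
    using power_add_eq_mult_plus_power by blast
  obtain D' where D': "(x ^ (p ^ a) - 1) ^ p = (x ^ (p ^ a)) ^ p - 1 + of_nat p * D'"
    using sub_one_power_prime[OF p] by blast
  have "(x - 1) ^ (p ^ Suc a) = ((x - 1) ^ (p ^ a)) ^ p"
    by (metis power_Suc2 power_mult)
  also have "\<dots> = x ^ (p ^ Suc a) - 1 + of_nat p * (D' + C * D)"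
    unfolding C using D D' by (simp add: power_mult[symmetric] mult.commute algebra_simps)
  finally show ?case by blast
qed

text \<open>With \<open>x = X\<close>: \<open>\<Delta>\<close> is nilpotent modulo \<open>p\<^sup>k\<close> on \<open>p\<^sup>a\<close>-periodic functions.\<close>
lemma sub_one_power_in_ideal:
  fixes x :: "'a :: comm_ring_1"
  assumes p: "prime p"
  shows "\<exists>A C. (x - 1) ^ (p ^ a * k) = (x ^ (p ^ a) - 1) * A + of_nat p ^ k * C"
proof -
  obtain C where C: "(x - 1) ^ (p ^ a) = x ^ (p ^ a) - 1 + of_nat p * C"
    using sub_one_power_prime_power[OF p] by blast
  obtain A where A: "(x ^ (p ^ a) - 1 + of_nat p * C) ^ k = (x ^ (p ^ a) - 1) * A + (of_nat p * C) ^ k"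
    using power_add_eq_mult_plus_power by blast
  have "(x - 1) ^ (p ^ a * k) = (x ^ (p ^ a) - 1) * A + of_nat p ^ k * C ^ k"
    by (simp add: power_mult C A power_mult_distrib)
  then show ?thesis by blast
qed

text \<open>The case \<open>j = 1\<close> is \<open>u\<^sup>r - 1 = (u - 1) (r + (u - 1) R)\<close>; multiplying by \<open>r\<close> raises \<open>j\<close>.\<close>
lemma of_nat_power_mult_sub_one_in_ideal:
  fixes u :: "'a :: comm_ring_1"
  shows "\<exists>A B. of_nat r ^ j * (u - 1) = (u ^ r - 1) * A + (u - 1) ^ Suc j * B"
proof -
  define R where "R = (\<Sum>i<r. \<Sum>l<i. u ^ l)"
  have "(\<Sum>i<r. u ^ i) - of_nat r = (\<Sum>i<r. u ^ i - 1)"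
    by (simp add: sum_subtractf)
  also have "\<dots> = (u - 1) * R"
    by (simp add: power_diff_1_eq R_def sum_distrib_left)
  finally have "(\<Sum>i<r. u ^ i) = of_nat r + (u - 1) * R"
    by (simp add: algebra_simps)
  then have "u ^ r - 1 = (u - 1) * (of_nat r + (u - 1) * R)"
    using power_diff_1_eq[of u r] by simp
  then have base: "of_nat r * (u - 1) = (u ^ r - 1) - (u - 1) ^ 2 * R"
    by (simp add: algebra_simps power2_eq_square)
  show ?thesis
  proof (induction j)
    case 0
    show ?case by (rule exI[of _ 0], rule exI[of _ 1]) simp
  next
    case (Suc j)
    then obtain A B where AB: "of_nat r ^ j * (u - 1) = (u ^ r - 1) * A + (u - 1) ^ Suc j * B"
      by blast
    have "of_nat r ^ Suc j * (u - 1) = of_nat r * ((u ^ r - 1) * A + (u - 1) ^ Suc j * B)"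
      by (metis AB mult.assoc power_Suc)
    also have "\<dots> = of_nat r * ((u ^ r - 1) * A) + (u - 1) ^ j * B * (of_nat r * (u - 1))"
      by (simp add: algebra_simps)
    also have "\<dots> = (u ^ r - 1) * (of_nat r * A + (u - 1) ^ j * B) + (u - 1) ^ Suc (Suc j) * (- B * R)"
      unfolding base by (simp add: algebra_simps power2_eq_square)
    finally show ?case by blast
  qed
qed

section \<open>Newton interpolation modulo prime powers\<close>

lemma ibinom_Suc_Suc: "ibinom (x + 1) (Suc k) = ibinom x k + ibinom x (Suc k)"
  using gbinomial_int_Suc_Suc[of x k]
  unfolding gbinomial_prod_rev ibinom_def by (simp add: atLeast0LessThan)

lemma ibinom_0 [simp]: "ibinom x 0 = 1"
  by (simp add: ibinom_def)

lemma ibinom_0_Suc [simp]: "ibinom 0 (Suc k) = 0"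
proof -
  have "(\<Prod>i<Suc k. 0 - int i) = 0"
    by (rule prod_zero) auto
  then show ?thesis by (simp only: ibinom_def) simp
qed

lemma dvd_if_fdiff_dvd:
  fixes g :: "int \<Rightarrow> int"
  assumes "\<And>t. m dvd fdiff g t" and "m dvd g 0"
  shows "m dvd g x"
proof (induction x rule: int_induct[where k = 0])
  case (step1 i)
  have "g (i + 1) = fdiff g i + g i" by (simp add: fdiff_def)
  then show ?case using assms(1)[of i] step1 by simp
next
  case (step2 i)
  have "g (i - 1) = g i - fdiff g (i - 1)" by (simp add: fdiff_def)
  then show ?case using assms(1)[of "i - 1"] step2 by simp
qed (use assms(2) in simp)

lemma newton_interpolation_cong:
  fixes h :: "int \<Rightarrow> int"
  assumes "\<And>t. m dvd (fdiff ^^ M) h t"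
  shows "[h x = (\<Sum>d<M. (fdiff ^^ d) h 0 * ibinom x d)] (mod m)"
  unfolding cong_iff_dvd_diff using assms
proof (induction M arbitrary: h x)
  case (Suc M)
  define G where "G x = (\<Sum>d<Suc M. (fdiff ^^ d) h 0 * ibinom x d)" for x
  have fdiff_power_Suc: "(fdiff ^^ d) (fdiff h) = (fdiff ^^ Suc d) h" for d
    by (simp only: funpow_Suc_right o_apply)
  have fdiff_G: "fdiff G t = (\<Sum>d<M. (fdiff ^^ Suc d) h 0 * ibinom t d)" for t
  proof -
    have "fdiff G t = (\<Sum>d<Suc M. (fdiff ^^ d) h 0 * (ibinom (t + 1) d - ibinom t d))"
      by (simp add: fdiff_def G_def sum_subtractf algebra_simps)
    also have "\<dots> = (\<Sum>d<M. (fdiff ^^ Suc d) h 0 * ibinom t d)"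
      by (simp only: sum.lessThan_Suc_shift ibinom_Suc_Suc) simp
    finally show ?thesis .
  qed
  have IH: "m dvd (fdiff h t - (\<Sum>d<M. (fdiff ^^ d) (fdiff h) 0 * ibinom t d))" for t
    by (rule Suc.IH) (metis fdiff_power_Suc Suc.prems)
  have "m dvd h x - G x"
  proof (rule dvd_if_fdiff_dvd[where g = "\<lambda>x. h x - G x"])
    fix t
    have "fdiff (\<lambda>x. h x - G x) t = fdiff h t - fdiff G t" by (simp add: fdiff_def)
    then show "m dvd fdiff (\<lambda>x. h x - G x) t" using IH[of t] by (simp add: fdiff_G fdiff_power_Suc)
  next
    have "G 0 = h 0" by (simp add: G_def sum.lessThan_Suc_shift del: sum.lessThan_Suc)
    then show "m dvd h 0 - G 0" by simp
  qed
  then show ?case by (simp add: G_def)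
qed simp

lemma prime_power_dvd_fdiff_power_periodic:
  fixes h :: "int \<Rightarrow> int"
  assumes p: "prime p" and periodic: "\<And>t. h (t + int (p ^ a)) = h t"
  shows "int p ^ k dvd (fdiff ^^ (p ^ a * k)) h t"
proof -
  obtain A C where "([:0, 1:] - 1) ^ (p ^ a * k) = ([:0, 1:] ^ (p ^ a) - 1) * A + of_nat p ^ k * (C :: int poly)"
    using sub_one_power_in_ideal[OF p] by blast
  then have AC: "[:-1, 1:] ^ (p ^ a * k) = A * ([:0, 1:] ^ (p ^ a) - 1) + smult (int p ^ k) C"
    unfolding monom_1_minus_1 by (simp add: of_nat_poly mult.commute const_poly_power)
  have "(fdiff ^^ (p ^ a * k)) h t
      = shift_act A (shift_act ([:0, 1:] ^ (p ^ a) - 1) h) t + zsmul (int p ^ k) (shift_act C h t)"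
    by (simp add: shift_act_fdiff_power[symmetric] AC shift_act_add shift_act_mult shift_act_smult)
  also have "shift_act A (shift_act ([:0, 1:] ^ (p ^ a) - 1) h) t = 0"
    by (rule shift_act_eq_0) (simp only: shift_act_monom_minus_1 periodic diff_self)
  finally show ?thesis by simp
qed

lemma residue_indicator_cong_binomial_sum:
  assumes "prime p"
  shows "\<exists>c. \<forall>x. [(if x mod int (p ^ a) = u mod int (p ^ a) then 1 else 0)
                   = (\<Sum>d<p ^ a * k. c d * ibinom x d)] (mod int p ^ k)"
proof -
  define h :: "int \<Rightarrow> int" where "h x = (if x mod int (p ^ a) = u mod int (p ^ a) then 1 else 0)" for x
  have "h (t + int (p ^ a)) = h t" for t
    by (simp add: h_def)
  then have "[h x = (\<Sum>d<p ^ a * k. (fdiff ^^ d) h 0 * ibinom x d)] (mod int p ^ k)" for x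
    by (intro newton_interpolation_cong prime_power_dvd_fdiff_power_periodic[OF assms])
  then show ?thesis by (intro exI[of _ "\<lambda>d. (fdiff ^^ d) h 0"]) (simp add: h_def)
qed

definition polyfract_fun :: "nat \<Rightarrow> ((nat \<Rightarrow> int) \<Rightarrow> 'b :: ab_group_add) \<Rightarrow> bool" where
  "polyfract_fun n g \<longleftrightarrow> (\<exists>D c. finite D \<and> (\<forall>x. polyfract_eval n D c x = g x))"

lemma polyfractal_iff_polyfract_fun:
  "polyfractal q n \<psi> f \<longleftrightarrow> polyfract_fun n (\<lambda>x. f (\<psi> (redq q n x)))"
  by (simp add: polyfractal_def polyfract_fun_def)

lemma polyfract_eval_add_coeffs:
  "polyfract_eval n D (\<lambda>\<delta>. c \<delta> + c' \<delta>) x = polyfract_eval n D c x + polyfract_eval n D c' x"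
  by (simp add: polyfract_eval_def zsmul_add_right sum.distrib)

lemma polyfract_eval_extend_by_0:
  assumes "finite D" "D' \<subseteq> D"
  shows "polyfract_eval n D (\<lambda>\<delta>. if \<delta> \<in> D' then c \<delta> else 0) x = polyfract_eval n D' c x"
  unfolding polyfract_eval_def
  by (rule sum.mono_neutral_cong_right) (use assms in auto)

lemma polyfract_fun_0: "polyfract_fun n (\<lambda>x. 0)"
  unfolding polyfract_fun_def polyfract_eval_def by (rule exI[of _ "{}"]) simp

lemma polyfract_fun_add:
  assumes "polyfract_fun n g" "polyfract_fun n g'"
  shows "polyfract_fun n (\<lambda>x. g x + g' x)"
proof -
  obtain D c where D: "finite D" "\<And>x. polyfract_eval n D c x = g x"
    using assms(1) unfolding polyfract_fun_def by blast
  obtain D' c' where D': "finite D'" "\<And>x. polyfract_eval n D' c' x = g' x"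
    using assms(2) unfolding polyfract_fun_def by blast
  let ?c = "\<lambda>\<delta>. (if \<delta> \<in> D then c \<delta> else 0) + (if \<delta> \<in> D' then c' \<delta> else 0)"
  have "polyfract_eval n (D \<union> D') ?c x = g x + g' x" for x
    using D D' by (simp add: polyfract_eval_add_coeffs polyfract_eval_extend_by_0)
  then show ?thesis
    unfolding polyfract_fun_def using D D' by blast
qed

lemma polyfract_fun_zsmul:
  assumes "polyfract_fun n g"
  shows "polyfract_fun n (\<lambda>x. zsmul k (g x))"
proof -
  obtain D c where D: "finite D" "\<And>x. polyfract_eval n D c x = g x"
    using assms unfolding polyfract_fun_def by blast
  have "polyfract_eval n D (\<lambda>\<delta>. zsmul k (c \<delta>)) x = zsmul k (g x)" for x
    unfolding D(2)[symmetric] polyfract_eval_def by (simp add: zsmul_sum_right zsmul_commute)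
  then show ?thesis
    unfolding polyfract_fun_def using D(1) by blast
qed

lemma polyfract_fun_sum:
  "finite I \<Longrightarrow> (\<And>i. i \<in> I \<Longrightarrow> polyfract_fun n (g i)) \<Longrightarrow> polyfract_fun n (\<lambda>x. \<Sum>i\<in>I. g i x)"
  by (induction I rule: finite_induct) (simp_all add: polyfract_fun_0 polyfract_fun_add)

text \<open>The product of the one-variable approximations agrees with the indicator modulo \<open>p\<^sup>k\<close>,
  which suffices since \<open>p\<^sup>k\<close> kills \<open>b\<close>.\<close>
lemma polyfract_fun_residue_class_indicator:
  fixes b :: "'b :: ab_group_add"
  assumes p: "prime p" and b: "zsmul (int p ^ k) b = 0"
  shows "polyfract_fun n (\<lambda>x. if \<forall>j<n. x j mod int (p ^ a) = u j mod int (p ^ a) then b else 0)"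
proof -
  define M where "M = p ^ a * k"
  define ind where "ind j y = (if y mod int (p ^ a) = u j mod int (p ^ a) then 1 else (0 :: int))" for j y
  have "\<exists>c. \<forall>y. [ind j y = (\<Sum>d<M. c d * ibinom y d)] (mod int p ^ k)" for j
    unfolding ind_def M_def by (rule residue_indicator_cong_binomial_sum[OF p])
  then obtain cc where cc: "\<And>j y. [ind j y = (\<Sum>d<M. cc j d * ibinom y d)] (mod int p ^ k)"
    by metis
  define D where "D = PiE {..<n} (\<lambda>_. {..<M})"
  define c where "c \<delta> = zsmul (\<Prod>j<n. cc j (\<delta> j)) b" for \<delta>
  have "polyfract_eval n D c x = (if \<forall>j<n. x j mod int (p ^ a) = u j mod int (p ^ a) then b else 0)" for x
  proof -
    have "polyfract_eval n D c x = zsmul (\<Sum>\<delta>\<in>D. \<Prod>j<n. cc j (\<delta> j) * ibinom (x j) (\<delta> j)) b"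
      unfolding polyfract_eval_def c_def zsmul_sum_left zsmul_mult[symmetric] prod.distrib
      by (simp add: mult.commute)
    also have "(\<Sum>\<delta>\<in>D. \<Prod>j<n. cc j (\<delta> j) * ibinom (x j) (\<delta> j)) = (\<Prod>j<n. \<Sum>d<M. cc j d * ibinom (x j) d)"
      unfolding D_def by (rule prod_sum_PiE[symmetric]) auto
    also have "zsmul \<dots> b = zsmul (\<Prod>j<n. ind j (x j)) b"
      by (rule zsmul_cong[OF b]) (rule cong_prod, rule cong_sym, rule cc)
    also have "(\<Prod>j<n. ind j (x j)) = (if \<forall>j<n. x j mod int (p ^ a) = u j mod int (p ^ a) then 1 else 0)"
    proof (cases "\<forall>j<n. x j mod int (p ^ a) = u j mod int (p ^ a)")
      case False
      then obtain j where "j < n" "x j mod int (p ^ a) \<noteq> u j mod int (p ^ a)" by blast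
      then have "(\<Prod>j<n. ind j (x j)) = 0" by (intro prod_zero) (auto simp: ind_def)
      then show ?thesis by (simp only: if_not_P[OF False])
    qed (simp add: ind_def)
    finally show ?thesis
      by (simp only: if_distrib[of "\<lambda>k. zsmul k b"] zsmul_one_left zsmul_zero_left)
  qed
  moreover have "finite D" unfolding D_def by (rule finite_PiE) auto
  ultimately show ?thesis unfolding polyfract_fun_def by blast
qed

lemma finite_Zq: "finite (Zq q n)"
proof -
  have "Zq q n \<subseteq> (\<lambda>f j. if j < n then f j else 0) ` PiE {..<n} (\<lambda>j. {0..<q j})"
  proof
    fix u assume "u \<in> Zq q n"
    then show "u \<in> (\<lambda>f j. if j < n then f j else 0) ` PiE {..<n} (\<lambda>j. {0..<q j})"
      by (intro image_eqI[of _ _ "restrict u {..<n}"]) (auto simp: Zq_def)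
  qed
  moreover have "finite (PiE {..<n} (\<lambda>j. {0..<q j}))" by (rule finite_PiE) auto
  ultimately show ?thesis by (meson finite_surj)
qed

text \<open>Such a \<open>g\<close> is a finite sum of multiples of residue class indicators.\<close>
lemma polyfract_fun_periodic:
  fixes g :: "(nat \<Rightarrow> int) \<Rightarrow> 'b :: ab_group_add"
  assumes p: "prime p" and torsion: "\<And>x. zsmul (int p ^ k) (g x) = 0"
    and periodic: "\<And>x y. \<forall>j<n. x j mod int (p ^ a) = y j mod int (p ^ a) \<Longrightarrow> g x = g y"
  shows "polyfract_fun n g"
proof -
  define N where "N = int (p ^ a)"
  define U where "U = Zq (\<lambda>_. N) n"
  have N: "N > 0" using p by (simp add: N_def prime_gt_0_nat)
  have indicators: "polyfract_fun n (\<lambda>x. if \<forall>j<n. x j mod N = u j mod N then g u else 0)" for u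
    unfolding N_def by (rule polyfract_fun_residue_class_indicator[OF p torsion])
  have "(\<Sum>u\<in>U. if \<forall>j<n. x j mod N = u j mod N then g u else 0) = g x" for x
  proof -
    define u0 where "u0 j = (if j < n then x j mod N else 0)" for j
    have "u0 \<in> U" using N by (auto simp: U_def Zq_def u0_def)
    have "(\<forall>j<n. x j mod N = u j mod N) \<longleftrightarrow> u = u0" if "u \<in> U" for u
    proof
      assume "\<forall>j<n. x j mod N = u j mod N"
      then show "u = u0"
        using that by (intro ext) (auto simp: U_def Zq_def u0_def)
    qed (simp add: u0_def)
    then have "(\<Sum>u\<in>U. if \<forall>j<n. x j mod N = u j mod N then g u else 0) = (\<Sum>u\<in>U. if u = u0 then g u else 0)"
      by (intro sum.cong) auto
    also have "\<dots> = g u0" using \<open>u0 \<in> U\<close> by (simp add: U_def finite_Zq)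
    also have "g u0 = g x" by (rule periodic) (simp add: u0_def N_def)
    finally show ?thesis .
  qed
  moreover have "polyfract_fun n (\<lambda>x. \<Sum>u\<in>U. if \<forall>j<n. x j mod N = u j mod N then g u else 0)"
    by (intro polyfract_fun_sum indicators) (simp add: U_def finite_Zq)
  ultimately show ?thesis by simp
qed

section \<open>Rigidity along coordinate lines\<close>

lemma fdiff_power_sum:
  "(fdiff ^^ M) (\<lambda>t. \<Sum>i\<in>I. f i t) t = (\<Sum>i\<in>I. (fdiff ^^ M) (f i) t)"
  by (simp add: shift_act_fdiff_power[symmetric] shift_act_sum)

lemma fdiff_power_0: "(fdiff ^^ k) (\<lambda>t. 0 :: 'b :: ab_group_add) = (\<lambda>t. 0)"
  by (induction k) (simp_all add: fdiff_def[abs_def])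

lemma fdiff_power_zsmul_ibinom_eq_0:
  fixes c :: "'b :: ab_group_add"
  shows "d < k \<Longrightarrow> (fdiff ^^ k) (\<lambda>t. zsmul (ibinom (y + t) d * K) c) = (\<lambda>t. 0)"
proof (induction k arbitrary: d)
  case (Suc k)
  have fdiff_power_Suc: "(fdiff ^^ Suc k) h = (fdiff ^^ k) (fdiff h)" for h :: "int \<Rightarrow> 'b"
    by (simp only: funpow_Suc_right o_apply)
  show ?case
  proof (cases d)
    case 0
    then have "fdiff (\<lambda>t. zsmul (ibinom (y + t) d * K) c) = (\<lambda>t. 0)"
      by (intro ext) (simp add: fdiff_def)
    then show ?thesis by (simp only: fdiff_power_Suc fdiff_power_0)
  next
    case (Suc d')
    have "fdiff (\<lambda>t. zsmul (ibinom (y + t) d * K) c) = (\<lambda>t. zsmul (ibinom (y + t) d' * K) c)"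
    proof (rule ext)
      fix t
      have "ibinom (y + (t + 1)) d = ibinom (y + t) d' + ibinom (y + t) d"
        using ibinom_Suc_Suc[of "y + t" d'] by (simp add: Suc add.assoc)
      then show "fdiff (\<lambda>t. zsmul (ibinom (y + t) d * K) c) t = zsmul (ibinom (y + t) d' * K) c"
        by (simp add: fdiff_def zsmul_diff_left[symmetric] algebra_simps)
    qed
    moreover have "d' < k" using Suc.prems \<open>d = Suc d'\<close> by simp
    ultimately show ?thesis using Suc.IH[of d'] by (simp only: fdiff_power_Suc)
  qed
qed simp

lemma fdiff_power_polyfract_eval_line:
  fixes c :: "(nat \<Rightarrow> nat) \<Rightarrow> 'b :: ab_group_add"
  assumes D: "finite D" and j: "j < n"
  shows "\<exists>M. \<forall>t. (fdiff ^^ M) (\<lambda>t. polyfract_eval n D c (x(j := x j + t))) t = 0"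
proof -
  define M where "M = Suc (\<Sum>\<delta>\<in>D. \<delta> j)"
  define K where "K \<delta> = (\<Prod>i\<in>{..<n} - {j}. ibinom (x i) (\<delta> i))" for \<delta>
  have "(\<Prod>i<n. ibinom ((x(j := x j + t)) i) (\<delta> i)) = ibinom (x j + t) (\<delta> j) * K \<delta>" for t \<delta>
  proof -
    have "(\<Prod>i<n. ibinom ((x(j := x j + t)) i) (\<delta> i))
        = ibinom (x j + t) (\<delta> j) * (\<Prod>i\<in>{..<n} - {j}. ibinom ((x(j := x j + t)) i) (\<delta> i))"
      using j by (subst prod.remove[of _ j]) auto
    also have "(\<Prod>i\<in>{..<n} - {j}. ibinom ((x(j := x j + t)) i) (\<delta> i)) = K \<delta>"
      unfolding K_def by (rule prod.cong) auto
    finally show ?thesis .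
  qed
  then have line: "polyfract_eval n D c (x(j := x j + t))
      = (\<Sum>\<delta>\<in>D. zsmul (ibinom (x j + t) (\<delta> j) * K \<delta>) (c \<delta>))" for t
    by (simp add: polyfract_eval_def)
  have "(fdiff ^^ M) (\<lambda>t. zsmul (ibinom (x j + t) (\<delta> j) * K \<delta>) (c \<delta>)) = (\<lambda>t. 0)" if "\<delta> \<in> D" for \<delta>
  proof (rule fdiff_power_zsmul_ibinom_eq_0)
    show "\<delta> j < M" unfolding M_def using D that by (intro le_imp_less_Suc member_le_sum) auto
  qed
  then have "(fdiff ^^ M) (\<lambda>t. polyfract_eval n D c (x(j := x j + t))) t = 0" for t
    unfolding line fdiff_power_sum by (simp cong: sum.cong)
  then show ?thesis by blast
qed

lemma periodic_int_mult:
  assumes "\<And>t. h (t + N) = h t"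
  shows "h (t + N * (s :: int)) = h (t :: int)"
proof (induction s rule: int_induct[where k = 0])
  case (step1 i)
  then show ?case using assms[of "t + N * i"] by (simp add: algebra_simps)
next
  case (step2 i)
  then show ?case using assms[of "t + N * (i - 1)"] by (simp add: algebra_simps)
qed simp

text \<open>With \<open>u = X\<^sup>N\<close>, the identity \<open>r\<^sup>M (u - 1) \<in> (u\<^sup>r - 1, (u - 1)\<^sup>M\<^sup>+\<^sup>1)\<close> shows that
  \<open>r\<^sup>M (H(t + N) - H t) = 0\<close>; as \<open>P\<close> also kills it and \<open>gcd (r\<^sup>M) P = 1\<close>, it vanishes.\<close>
lemma periodic_coprime_factor:
  fixes H :: "int \<Rightarrow> 'b :: ab_group_add"
  assumes periodic: "\<And>t. H (t + int N * int r) = H t"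
    and annihilated: "\<And>t. (fdiff ^^ M) H t = 0"
    and torsion: "\<And>t. zsmul P (H t) = 0"
    and coprime: "coprime (int r) P"
  shows "H (t + int N) = H t"
proof -
  define u :: "int poly" where "u = [:0, 1:] ^ N"
  obtain A B where AB: "of_nat r ^ M * (u - 1) = (u ^ r - 1) * A + (u - 1) ^ Suc M * B"
    using of_nat_power_mult_sub_one_in_ideal by blast
  have "u - 1 = ([:0, 1:] - 1) * (\<Sum>i<N. [:0, 1:] ^ i)"
    unfolding u_def by (rule power_diff_1_eq)
  then obtain G where G: "u - 1 = [:-1, 1:] * G"
    unfolding monom_1_minus_1 by blast
  have e1: "smult (int r ^ M) (u - 1) = of_nat r ^ M * (u - 1)"
    by (simp add: of_nat_poly const_poly_power)
  have e2: "(u - 1) ^ Suc M * B = (G ^ Suc M * [:-1, 1:] * B) * [:-1, 1:] ^ M"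
    unfolding G by (simp only: power_mult_distrib power_Suc mult_ac)
  have e3: "(u ^ r - 1) * A = A * ([:0, 1:] ^ (N * r) - 1)"
    by (simp only: u_def power_mult mult.commute)
  have identity:
    "smult (int r ^ M) (u - 1) = A * ([:0, 1:] ^ (N * r) - 1) + (G ^ Suc M * [:-1, 1:] * B) * [:-1, 1:] ^ M"
    unfolding e1 AB e2 e3 ..
  have "zsmul (int r ^ M) (H (t + int N) - H t) = shift_act (smult (int r ^ M) (u - 1)) H t"
    by (simp add: shift_act_smult u_def shift_act_monom_minus_1)
  also have "\<dots> = 0"
    unfolding identity shift_act_add shift_act_mult
    by (simp add: shift_act_eq_0 shift_act_monom_minus_1 shift_act_fdiff_power annihilated periodic)
  finally have "zsmul (int r ^ M) (H (t + int N) - H t) = 0" .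
  moreover have "zsmul P (H (t + int N) - H t) = 0"
    by (simp add: zsmul_diff_right torsion)
  moreover have "gcd (int r ^ M) P = 1"
    using coprime by simp
  ultimately show ?thesis
    using zsmul_eq_0_gcd[of "int r ^ M" "H (t + int N) - H t" P] by simp
qed

text \<open>\<open>H\<close> is already periodic modulo the \<open>p\<close>-part \<open>N\<close> of \<open>Q\<close>, and \<open>N\<close> divides \<open>s\<close> as \<open>p \<nmid> m\<close>.\<close>
lemma periodic_rigidity:
  fixes H :: "int \<Rightarrow> 'b :: ab_group_add"
  assumes p: "prime p" and Q: "Q > 0"
    and periodic: "\<And>t. H (t + Q) = H t"
    and annihilated: "\<And>t. (fdiff ^^ M) H t = 0"
    and torsion: "\<And>t. zsmul (int p ^ v) (H t) = 0"
    and coprime: "coprime (int m) (int p)"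
    and dvd: "Q dvd int m * s"
  shows "H s = H 0"
proof -
  have prime_int: "prime (int p)" using p by simp
  have "Q \<noteq> 0" "\<not> is_unit (int p)" using Q prime_int not_prime_unit by auto
  obtain r where r: "Q = int p ^ multiplicity (int p) Q * r" "\<not> int p dvd r"
    by (rule multiplicity_decompose'[where x = Q and p = "int p"]) (use \<open>Q \<noteq> 0\<close> \<open>\<not> is_unit (int p)\<close> in simp_all)
  define N where "N = p ^ multiplicity (int p) Q"
  have QN: "Q = int N * r" using r(1) by (simp add: N_def)
  have "int N > 0" unfolding N_def using prime_gt_0_nat[OF p] by simp
  with Q QN have r0: "r > 0" by (simp add: zero_less_mult_iff)
  have period_N: "H (t + int N) = H t" for t
  proof (rule periodic_coprime_factor[where r = "nat r" and M = M and P = "int p ^ v"])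
    show "H (t + int N * int (nat r)) = H t" for t using periodic[of t] QN r0 by simp
    have "coprime (int p) r" using prime_imp_coprime[OF prime_int r(2)] .
    then show "coprime (int (nat r)) (int p ^ v)" using r0 by (simp add: coprime_commute)
    show "(fdiff ^^ M) H t = 0" for t by (rule annihilated)
    show "zsmul (int p ^ v) (H t) = 0" for t by (rule torsion)
  qed
  have "coprime (int N) (int m)" using coprime by (simp add: N_def coprime_commute)
  moreover have "int N dvd int m * s" using dvd unfolding QN by (rule dvd_mult_left)
  ultimately have "int N dvd s" using coprime_dvd_mult_right_iff[of "int N" "int m" s] by blast
  then obtain s' where "s = int N * s'" by (elim dvdE)
  then show ?thesis using periodic_int_mult[of H "int N" 0 s', OF period_N] by simp
qed

text \<open>Move from \<open>u\<close> to \<open>u + w\<close> one coordinate at a time, applying rigidity with \<open>Q = q j\<close>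
  on each coordinate line.\<close>
lemma polyfract_fun_translation_invariant:
  fixes h :: "(nat \<Rightarrow> int) \<Rightarrow> 'b :: ab_group_add"
  assumes "polyfract_fun n h" and p: "prime p"
    and torsion: "\<And>x. zsmul (int p ^ v) (h x) = 0"
    and residues: "\<And>x y. (\<And>j. j < n \<Longrightarrow> x j mod q j = y j mod q j) \<Longrightarrow> h x = h y"
    and q: "\<And>j. j < n \<Longrightarrow> q j > 0"
    and coprime: "coprime (int m) (int p)"
    and w: "\<And>j. j < n \<Longrightarrow> q j dvd int m * w j"
  shows "h (\<lambda>j. u j + w j) = h u"
proof -
  obtain D c where D: "finite D" and h: "\<And>x. polyfract_eval n D c x = h x"
    using assms(1) unfolding polyfract_fun_def by blast
  have "k \<le> n \<Longrightarrow> h (\<lambda>j. u j + (if j < k then w j else 0)) = h u" for k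
  proof (induction k)
    case (Suc k)
    then have k: "k < n" by simp
    define x where "x = (\<lambda>j. u j + (if j < k then w j else 0))"
    define H where "H t = h (x(k := x k + t))" for t
    obtain M where M: "\<And>t. (fdiff ^^ M) (\<lambda>t. polyfract_eval n D c (x(k := x k + t))) t = 0"
      using fdiff_power_polyfract_eval_line[OF D k] by blast
    have annihilated: "(fdiff ^^ M) H t = 0" for t
      using M[of t] unfolding h H_def[abs_def] .
    have "h (\<lambda>j. u j + (if j < Suc k then w j else 0)) = H (w k)"
      unfolding H_def by (rule arg_cong[of _ _ h]) (simp add: x_def fun_eq_iff)
    also have "H (w k) = H 0"
    proof (rule periodic_rigidity[OF p q[OF k] _ annihilated _ coprime w[OF k]])
      show "H (t + q k) = H t" for t
        unfolding H_def by (rule residues) (auto simp flip: add.assoc)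
      show "zsmul (int p ^ v) (H t) = 0" for t
        unfolding H_def by (rule torsion)
    qed
    also have "H 0 = h x"
      by (simp add: H_def)
    also have "h x = h u"
      using Suc unfolding x_def by simp
    finally show ?case .
  qed simp
  moreover have "h (\<lambda>j. u j + w j) = h (\<lambda>j. u j + (if j < n then w j else 0))"
    by (rule residues) simp
  ultimately show ?thesis by simp
qed

section \<open>Primary decomposition\<close>

definition ppart :: "nat \<Rightarrow> nat \<Rightarrow> nat" where
  "ppart E p = p ^ multiplicity p E"

definition copart :: "nat \<Rightarrow> nat \<Rightarrow> nat" where
  "copart E p = E div ppart E p"

text \<open>The idempotent \<open>e\<^sub>p\<close> of \<open>\<int>/E\<close>, given by the Chinese remainder theorem.\<close>
definition primary_idem :: "nat \<Rightarrow> nat \<Rightarrow> int" where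
  "primary_idem E p = (SOME e. [e = 1] (mod int (ppart E p)) \<and> int (copart E p) dvd e)"

lemma ppart_mult_copart: "ppart E p * copart E p = E"
  unfolding copart_def ppart_def using multiplicity_dvd[of p E] by simp

lemma not_dvd_copart: "E > 0 \<Longrightarrow> prime p \<Longrightarrow> \<not> p dvd copart E p"
  unfolding ppart_def copart_def by (rule multiplicity_decompose) auto

lemma coprime_copart: "E > 0 \<Longrightarrow> prime p \<Longrightarrow> coprime (copart E p) p"
  using not_dvd_copart prime_imp_coprime coprime_commute by blast

lemma primary_idem:
  assumes "E > 0" "prime p"
  shows "[primary_idem E p = 1] (mod int (ppart E p))" "int (copart E p) dvd primary_idem E p"
proof -
  have "coprime (int (ppart E p)) (int (copart E p))"
    using coprime_copart[OF assms] unfolding ppart_def by (simp add: coprime_commute)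
  then obtain u v where uv: "u * int (ppart E p) + v * int (copart E p) = 1"
    using bezout_int[of "int (ppart E p)" "int (copart E p)"] by auto
  then have "v * int (copart E p) - 1 = int (ppart E p) * (- u)"
    by (simp add: algebra_simps)
  then have "[v * int (copart E p) = 1] (mod int (ppart E p))"
    by (simp add: cong_iff_dvd_diff)
  then have "\<exists>e. [e = 1] (mod int (ppart E p)) \<and> int (copart E p) dvd e"
    by (intro exI[of _ "v * int (copart E p)"]) simp
  from someI_ex[OF this] show "[primary_idem E p = 1] (mod int (ppart E p))" "int (copart E p) dvd primary_idem E p"
    unfolding primary_idem_def by blast+
qed

lemma ppart_dvd_copart:
  assumes "E > 0" "prime p" "prime p'" "p \<noteq> p'"
  shows "ppart E p' dvd copart E p"
proof -
  have "ppart E p' dvd ppart E p * copart E p"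
    using multiplicity_dvd[of p' E] unfolding ppart_mult_copart by (simp add: ppart_def)
  moreover have "coprime (ppart E p') (ppart E p)"
    unfolding ppart_def using primes_coprime[OF assms(3,2)] assms(4) by simp
  ultimately show ?thesis by (simp add: coprime_dvd_mult_right_iff)
qed

lemma dvd_if_ppart_dvd:
  fixes x y :: nat
  assumes "x \<noteq> 0" "\<And>p. prime p \<Longrightarrow> ppart x p dvd y"
  shows "x dvd y"
proof (cases "y = 0")
  case False
  show ?thesis
  proof (rule multiplicity_le_imp_dvd[OF assms(1)])
    fix p :: nat assume "prime p"
    then show "multiplicity p x \<le> multiplicity p y"
      using assms(2)[of p] False not_prime_unit by (intro multiplicity_geI) (auto simp: ppart_def)
  qed
qed simp

text \<open>Modulo the \<open>p\<close>-part of \<open>E\<close>, \<open>e\<^sub>p\<close> is \<open>1\<close> and all other idempotents vanish.\<close>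
lemma sum_primary_idem_cong_1:
  assumes E: "E > 0"
  shows "[(\<Sum>p\<in>{p. prime p \<and> p dvd E}. primary_idem E p) = 1] (mod int E)"
proof -
  define S where "S = {p. prime p \<and> p dvd E}"
  have "finite S" unfolding S_def using E by (auto intro: finite_subset[of _ "{..E}"] dest: dvd_imp_le)
  have "int (ppart E p) dvd (\<Sum>p\<in>S. primary_idem E p) - 1" if p: "prime p" for p
  proof (cases "p \<in> S")
    case True
    have "(\<Sum>p\<in>S. primary_idem E p) - 1 = (primary_idem E p - 1) + (\<Sum>p'\<in>S - {p}. primary_idem E p')"
      using sum.remove[OF \<open>finite S\<close> True] by simp
    moreover have "int (ppart E p) dvd primary_idem E p - 1"
      using primary_idem(1)[OF E p] by (simp add: cong_iff_dvd_diff)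
    moreover have "int (ppart E p) dvd (\<Sum>p'\<in>S - {p}. primary_idem E p')"
    proof (rule dvd_sum)
      fix p' assume "p' \<in> S - {p}"
      then have "prime p'" "p' \<noteq> p" by (auto simp: S_def)
      then have "int (ppart E p) dvd int (copart E p')"
        using ppart_dvd_copart[OF E _ p] by simp
      then show "int (ppart E p) dvd primary_idem E p'"
        using primary_idem(2)[OF E \<open>prime p'\<close>] by (rule dvd_trans)
    qed
    ultimately show ?thesis by (metis dvd_add)
  next
    case False
    then have "multiplicity p E = 0" using p by (simp add: S_def not_dvd_imp_multiplicity_0)
    then show ?thesis by (simp add: ppart_def)
  qed
  then have "int E dvd (\<Sum>p\<in>S. primary_idem E p) - 1"
    using dvd_if_ppart_dvd[of E "nat \<bar>(\<Sum>p\<in>S. primary_idem E p) - 1\<bar>"] E by simp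
  then show ?thesis unfolding S_def by (simp add: cong_iff_dvd_diff)
qed

context
  fixes E :: nat
  assumes E: "E > 0"
begin

lemma primary_zsmul_ppart:
  fixes x :: "'g :: ab_group_add"
  assumes torsion: "zsmul (int E) x = 0" and p: "prime p" and x: "x \<in> primary p"
  shows "zsmul (int (ppart E p)) x = 0"
proof -
  obtain k where k: "zsmul (int (p ^ k)) x = 0"
    using x unfolding primary_def by blast
  have "coprime (p ^ k) (copart E p)"
    using coprime_copart[OF E p] by (simp add: coprime_commute)
  then have "coprime (gcd (p ^ k) E) (copart E p)"
    by (rule coprime_imp_coprime) auto
  moreover have "gcd (p ^ k) E dvd ppart E p * copart E p"
    by (simp add: ppart_mult_copart)
  ultimately have "int (gcd (p ^ k) E) dvd int (ppart E p)"
    by (simp add: coprime_dvd_mult_left_iff)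
  moreover have "zsmul (int (gcd (p ^ k) E)) x = 0"
    using zsmul_eq_0_gcd[OF k torsion] by (simp only: gcd_int_int_eq)
  ultimately show ?thesis using zsmul_eq_0_dvd by blast
qed

lemma zsmul_ppart_primary_idem:
  assumes "prime p" and torsion: "zsmul (int E) (x :: 'g :: ab_group_add) = 0"
  shows "zsmul (int (ppart E p)) (zsmul (primary_idem E p) x) = 0"
proof -
  obtain t where "primary_idem E p = int (copart E p) * t"
    using primary_idem(2)[OF E assms(1)] by (elim dvdE)
  then have "int (ppart E p) * primary_idem E p = t * int E"
    using ppart_mult_copart[of E p] by (metis mult.commute mult.left_commute of_nat_mult)
  then show ?thesis
    by (simp add: zsmul_mult[symmetric] zsmul_mult[of t] torsion)
qed

lemma primary_idem_in_primary:
  "prime p \<Longrightarrow> zsmul (int E) (x :: 'g :: ab_group_add) = 0 \<Longrightarrow> zsmul (primary_idem E p) x \<in> primary p"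
  unfolding primary_def using zsmul_ppart_primary_idem by (auto simp: ppart_def)

lemma primary_decomposition:
  fixes x :: "'g :: ab_group_add"
  assumes "zsmul (int E) x = 0"
  shows "x = (\<Sum>p\<in>{p. prime p \<and> p dvd E}. zsmul (primary_idem E p) x)"
  using zsmul_cong[OF assms sum_primary_idem_cong_1[OF E]] by (simp add: zsmul_sum_left)

lemma copart_zsmul_sum_other_primary:
  fixes a :: "nat \<Rightarrow> 'g :: ab_group_add"
  assumes torsion: "\<And>y :: 'g. zsmul (int E) y = 0" and p: "prime p"
    and a: "\<And>p'. p' \<in> S \<Longrightarrow> prime p' \<and> a p' \<in> primary p'"
  shows "zsmul (int (copart E p)) (\<Sum>p'\<in>S - {p}. a p') = 0"
  unfolding zsmul_sum_right
proof (intro sum.neutral ballI)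
  fix p' assume p': "p' \<in> S - {p}"
  then have "zsmul (int (ppart E p')) (a p') = 0"
    using primary_zsmul_ppart[OF torsion] a by blast
  moreover have "int (ppart E p') dvd int (copart E p)"
    using ppart_dvd_copart[OF E p] a p' by auto
  ultimately show "zsmul (int (copart E p)) (a p') = 0"
    by (rule zsmul_eq_0_dvd)
qed

end

context
  fixes q :: "nat \<Rightarrow> int" and n :: nat and \<psi> :: "(nat \<Rightarrow> int) \<Rightarrow> 'a :: ab_group_add"
  assumes cyc: "cyc_iso q n \<psi>"
begin

lemma cyc_iso_pos: "j < n \<Longrightarrow> q j > 0"
  using cyc unfolding cyc_iso_def by blast

lemma redq_in_Zq: "redq q n x \<in> Zq q n"
  using cyc_iso_pos unfolding redq_def Zq_def by auto

lemma redq_Zq: "u \<in> Zq q n \<Longrightarrow> redq q n u = u"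
  unfolding redq_def Zq_def by (auto intro!: ext)

lemma redq_eqI: "(\<And>j. j < n \<Longrightarrow> x j mod q j = y j mod q j) \<Longrightarrow> redq q n x = redq q n y"
  unfolding redq_def by (auto intro!: ext)

lemma psi_redq_add: "\<psi> (redq q n (\<lambda>j. x j + y j)) = \<psi> (redq q n x) + \<psi> (redq q n y)"
proof -
  have "redq q n (\<lambda>j. redq q n x j + redq q n y j) = redq q n (\<lambda>j. x j + y j)"
    by (rule redq_eqI) (simp add: redq_def mod_add_eq)
  moreover have "\<psi> (redq q n (\<lambda>j. redq q n x j + redq q n y j)) = \<psi> (redq q n x) + \<psi> (redq q n y)"
    using cyc redq_in_Zq unfolding cyc_iso_def by blast
  ultimately show ?thesis by simp
qed

lemma psi_redq_0: "\<psi> (redq q n (\<lambda>j. 0)) = 0"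
  using psi_redq_add[of "\<lambda>j. 0" "\<lambda>j. 0"] by simp

lemma psi_redq_zsmul: "\<psi> (redq q n (\<lambda>j. k * x j)) = zsmul k (\<psi> (redq q n x))"
proof (induction k rule: int_induct[where k = 0])
  case (step1 i)
  have "\<psi> (redq q n (\<lambda>j. (i + 1) * x j)) = \<psi> (redq q n (\<lambda>j. i * x j + x j))"
    by (simp add: algebra_simps)
  then show ?case using step1 by (simp add: psi_redq_add zsmul_add_left)
next
  case (step2 i)
  have "\<psi> (redq q n (\<lambda>j. i * x j)) = \<psi> (redq q n (\<lambda>j. (i - 1) * x j + x j))"
    by (simp add: algebra_simps)
  then show ?case using step2 by (simp add: psi_redq_add zsmul_diff_left)
qed (simp add: psi_redq_0)

lemma psi_redq_surj: "\<exists>u. \<psi> (redq q n u) = a"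
proof -
  have "a \<in> \<psi> ` Zq q n"
    using cyc unfolding cyc_iso_def bij_betw_def by blast
  then obtain u where "u \<in> Zq q n" "\<psi> u = a" by blast
  then show ?thesis using redq_Zq by metis
qed

lemma psi_redq_eq_0_dvd: "\<psi> (redq q n x) = 0 \<Longrightarrow> j < n \<Longrightarrow> q j dvd x j"
proof -
  assume "\<psi> (redq q n x) = 0" and j: "j < n"
  moreover have "inj_on \<psi> (Zq q n)"
    using cyc unfolding cyc_iso_def bij_betw_def by blast
  ultimately have "redq q n x = redq q n (\<lambda>j. 0)"
    using psi_redq_0 redq_in_Zq by (metis inj_on_def)
  then have "x j mod q j = 0"
    using j by (metis redq_def mod_0)
  then show ?thesis by (simp add: mod_eq_0_iff_dvd)
qed

lemma primary_idem_polyfractal_translate: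
  fixes f :: "'a \<Rightarrow> 'b :: ab_group_add"
  assumes "polyfractal q n \<psi> f" and E: "E > 0" and p: "prime p"
    and torsion: "\<And>b :: 'b. zsmul (int E) b = 0"
    and z: "zsmul (int (copart E p)) z = 0"
  shows "zsmul (primary_idem E p) (f (y + z)) = zsmul (primary_idem E p) (f y)"
proof -
  obtain u where u: "\<psi> (redq q n u) = y" using psi_redq_surj by blast
  obtain w where w: "\<psi> (redq q n w) = z" using psi_redq_surj by blast
  define h where "h x = zsmul (primary_idem E p) (f (\<psi> (redq q n x)))" for x
  have "polyfract_fun n h"
    using assms(1) unfolding polyfractal_iff_polyfract_fun h_def by (rule polyfract_fun_zsmul)
  then have "h (\<lambda>j. u j + w j) = h u"
  proof (rule polyfract_fun_translation_invariant[OF _ p])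
    show "zsmul (int p ^ multiplicity p E) (h x) = 0" for x
      using zsmul_ppart_primary_idem[OF E p torsion] by (simp add: h_def ppart_def)
    show "h x = h x'" if "\<And>j. j < n \<Longrightarrow> x j mod q j = x' j mod q j" for x x'
      unfolding h_def using redq_eqI[OF that] by simp
    show "coprime (int (copart E p)) (int p)"
      using coprime_copart[OF E p] by simp
    show "q j dvd int (copart E p) * w j" if "j < n" for j
      by (rule psi_redq_eq_0_dvd[OF _ that]) (use z w in \<open>simp add: psi_redq_zsmul\<close>)
  qed (rule cyc_iso_pos)
  then show ?thesis
    using u w by (simp add: h_def psi_redq_add)
qed

lemma primary_idem_psi_redq_cong:
  assumes E: "E > 0" and p: "prime p" and torsion: "\<And>a :: 'a. zsmul (int E) a = 0"
    and cong: "\<forall>j<n. x j mod int (ppart E p) = y j mod int (ppart E p)"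
  shows "zsmul (primary_idem E p) (\<psi> (redq q n x)) = zsmul (primary_idem E p) (\<psi> (redq q n y))"
proof -
  define N where "N = int (ppart E p)"
  define w where "w j = (y j - x j) div N" for j
  have "y j mod q j = (x j + N * w j) mod q j" if "j < n" for j
  proof -
    have "N dvd y j - x j"
      using cong that by (simp add: N_def mod_eq_dvd_iff dvd_diff_commute)
    then show ?thesis by (simp add: w_def)
  qed
  then have "\<psi> (redq q n y) = \<psi> (redq q n x) + zsmul N (\<psi> (redq q n w))"
    using redq_eqI[of y "\<lambda>j. x j + N * w j"] by (simp add: psi_redq_add psi_redq_zsmul)
  moreover have "zsmul (primary_idem E p) (zsmul N (\<psi> (redq q n w))) = 0"
    using zsmul_ppart_primary_idem[OF E p torsion] by (simp add: zsmul_commute N_def)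
  ultimately show ?thesis
    by (simp add: zsmul_add_right)
qed

end

lemma finite_prime_divisors: "E > 0 \<Longrightarrow> finite {p. prime p \<and> p dvd (E :: nat)}"
  by (auto intro: finite_subset[of _ "{..E}"] dest: dvd_imp_le)

lemma zsmul_card_mult_card_UNIV:
  "zsmul (int (card (UNIV :: 'a set) * card (UNIV :: 'b set))) (x :: 'a :: {ab_group_add, finite}) = 0"
  "zsmul (int (card (UNIV :: 'a set) * card (UNIV :: 'b set))) (y :: 'b :: {ab_group_add, finite}) = 0"
  by (rule zsmul_eq_0_dvd[OF zsmul_card_UNIV]; simp)+

lemma polyfractal_in_primary_prod_maps:
  fixes f :: "'a :: {ab_group_add, finite} \<Rightarrow> 'b :: {ab_group_add, finite}"
  assumes cyc: "cyc_iso q n \<psi>" and f: "polyfractal q n \<psi> f"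
  shows "f \<in> primary_prod_maps"
proof -
  define E where "E = card (UNIV :: 'a set) * card (UNIV :: 'b set)"
  define S where "S = {p. prime p \<and> p dvd E}"
  have E: "E > 0" by (simp add: E_def finite_UNIV_card_ge_0)
  have torsion: "zsmul (int E) x = 0" "zsmul (int E) y = 0" for x :: 'a and y :: 'b
    unfolding E_def by (rule zsmul_card_mult_card_UNIV)+
  have "f (\<Sum>p\<in>S. a p) = (\<Sum>p\<in>S. zsmul (primary_idem E p) (f (a p)))"
    if a: "\<forall>p\<in>S. a p \<in> primary p" for a
  proof -
    have "f (\<Sum>p\<in>S. a p) = (\<Sum>p\<in>S. zsmul (primary_idem E p) (f (\<Sum>p\<in>S. a p)))"
      unfolding S_def by (rule primary_decomposition[OF E torsion(2)])
    also have "\<dots> = (\<Sum>p\<in>S. zsmul (primary_idem E p) (f (a p)))"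
    proof (rule sum.cong[OF refl])
      fix p assume "p \<in> S"
      then have "prime p" "(\<Sum>p\<in>S. a p) = a p + (\<Sum>p'\<in>S - {p}. a p')"
        using sum.remove[OF finite_prime_divisors[OF E]] by (auto simp: S_def)
      moreover have "zsmul (int (copart E p)) (\<Sum>p'\<in>S - {p}. a p') = 0"
        using a by (intro copart_zsmul_sum_other_primary[OF E torsion(1) \<open>prime p\<close>]) (auto simp: S_def)
      ultimately show "zsmul (primary_idem E p) (f (\<Sum>p\<in>S. a p)) = zsmul (primary_idem E p) (f (a p))"
        using primary_idem_polyfractal_translate[OF cyc f E _ torsion(2)] by simp
    qed
    finally show ?thesis .
  qed
  moreover have "zsmul (primary_idem E p) (f x) \<in> primary p" if "p \<in> S" for p x
    using that primary_idem_in_primary[OF E _ torsion(2)] by (simp add: S_def)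
  ultimately show ?thesis
    unfolding primary_prod_maps_def Let_def E_def[symmetric] S_def[symmetric]
    by (intro CollectI exI[of _ "\<lambda>p x. zsmul (primary_idem E p) (f x)"]) blast
qed

text \<open>Here \<open>f a = \<Sum>\<^sub>p F\<^sub>p (e\<^sub>p a)\<close>, and each summand is \<open>p\<close>-power torsion and depends only on
  the coordinates modulo the \<open>p\<close>-part of \<open>E\<close>.\<close>
lemma primary_prod_maps_polyfractal:
  fixes f :: "'a :: {ab_group_add, finite} \<Rightarrow> 'b :: {ab_group_add, finite}"
  assumes cyc: "cyc_iso q n \<psi>" and f: "f \<in> primary_prod_maps"
  shows "polyfractal q n \<psi> f"
proof -
  define E where "E = card (UNIV :: 'a set) * card (UNIV :: 'b set)"
  define S where "S = {p. prime p \<and> p dvd E}"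
  have E: "E > 0" by (simp add: E_def finite_UNIV_card_ge_0)
  have torsion: "zsmul (int E) x = 0" "zsmul (int E) y = 0" for x :: 'a and y :: 'b
    unfolding E_def by (rule zsmul_card_mult_card_UNIV)+
  obtain F :: "nat \<Rightarrow> 'a \<Rightarrow> 'b" where
    F_primary: "\<And>p a. p \<in> S \<Longrightarrow> a \<in> primary p \<Longrightarrow> F p a \<in> primary p" and
    F_sum: "\<And>a. \<forall>p\<in>S. a p \<in> primary p \<Longrightarrow> f (\<Sum>p\<in>S. a p) = (\<Sum>p\<in>S. F p (a p))"
    using f unfolding primary_prod_maps_def Let_def E_def[symmetric] S_def[symmetric] by blast
  have f_sum: "f a = (\<Sum>p\<in>S. F p (zsmul (primary_idem E p) a))" for a
    using F_sum[of "\<lambda>p. zsmul (primary_idem E p) a"] primary_decomposition[OF E torsion(1), of a]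
      primary_idem_in_primary[OF E _ torsion(1)]
    by (simp add: S_def)
  have "polyfract_fun n (\<lambda>x. \<Sum>p\<in>S. F p (zsmul (primary_idem E p) (\<psi> (redq q n x))))"
  proof (intro polyfract_fun_sum)
    fix p assume "p \<in> S"
    then have p: "prime p" by (simp add: S_def)
    show "polyfract_fun n (\<lambda>x. F p (zsmul (primary_idem E p) (\<psi> (redq q n x))))"
    proof (rule polyfract_fun_periodic[OF p, where k = "multiplicity p E" and a = "multiplicity p E"])
      show "zsmul (int p ^ multiplicity p E) (F p (zsmul (primary_idem E p) (\<psi> (redq q n x)))) = 0" for x
        using primary_zsmul_ppart[OF E torsion(2) p F_primary[OF \<open>p \<in> S\<close> primary_idem_in_primary[OF E p torsion(1)]]]
        by (simp add: ppart_def)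
      show "F p (zsmul (primary_idem E p) (\<psi> (redq q n x))) = F p (zsmul (primary_idem E p) (\<psi> (redq q n y)))"
        if "\<forall>j<n. x j mod int (p ^ multiplicity p E) = y j mod int (p ^ multiplicity p E)" for x y
        using primary_idem_psi_redq_cong[OF cyc E p torsion(1)] that unfolding ppart_def by metis
    qed
  qed (simp add: S_def finite_prime_divisors[OF E])
  then show ?thesis
    unfolding polyfractal_iff_polyfract_fun f_sum[symmetric] .
qed

theorem theorem3p17:
  fixes q :: "nat \<Rightarrow> int" and n :: nat and \<psi> :: "(nat \<Rightarrow> int) \<Rightarrow> 'a::{ab_group_add,finite}"
  assumes "cyc_iso q n \<psi>"
  shows "{f :: 'a \<Rightarrow> 'b::{ab_group_add,finite}. polyfractal q n \<psi> f} = primary_prod_maps"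
  using polyfractal_in_primary_prod_maps[OF assms] primary_prod_maps_polyfractal[OF assms] by blast

end
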